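(* Consider the multi-market oligopoly of equal capacity $\mathcal{G}$ described in the context, and suppose: each $u_x$ ($x\in E$) is concave and differentiable; $c$ is convex and differentiable; and at least one of the following holds: (a) all but at most one of the $u_x$ are strictly concave, or (b) $c$ is strictly convex. Then $\mathcal{G}$ has a pure-strategy Nash equilibrium, and every pure-strategy Nash equilibrium of $\mathcal{G}$ is strict.
   Context: Let $N=\{1,\dots,n\}$ be a set of firms (players) and $E=\{1,\dots,m\}$ a set of markets. Let $\Delta^{m-1}=\{\mathbf{v}\in\mathbb{R}^m:\mathbf{v}\ge 0,\ \mathbf{v}^{T}\mathbf{1}=1\}$. Each firm $i$ chooses a strategy $\mathbf{s}_i=(s_{ix})_{x=1}^m\in S_i=\Delta^{m-1}$. For each market $x$ let $u_x:\mathbb{R}_{\ge 0}\to\mathbb{R}_{\ge 0}$ with $u_x(0)=0$, and let $p_x(t)=u_x(t)/t$ for $t>0$. Let $c:\Delta^{m-1}\to\mathbb{R}_{\ge 0}$ be a common cost function. For a strategy profile $\mathbf{S}=(\mathbf{s}_i)_{i=1}^n$ put $s_x=\sum_{i=1}^n s_{ix}$ and $\mathbf{s}_{-i}=\sum_{j\ne i}\mathbf{s}_j$. The payoff of player $i$ is $u_i(\mathbf{s}_i;\mathbf{s}_{-i})=\sum_{x=1}^m p_x(s_x)s_{ix}-c(\mathbf{s}_i)$ (a term with $s_x=0$ is taken to be $0$). The game is $\mathcal{G}=(N,S,(u_i)_{i=1}^n)$ with $S=\prod_{i=1}^n\Delta^{m-1}$. A Nash equilibrium is strict if each player's equilibrium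 strategy is its unique best response to the others' equilibrium strategies. *)

theory Defs
  imports "HOL-Analysis.Analysis"
begin

text \<open>Players are indexed by a finite type 'n, markets by a finite type 'm.
  A strategy is a vector in real^'m lying in the standard std_simplex.\<close>

definition std_simplex :: "(real^'m::finite) set" where
  "std_simplex = {v. (\<forall>x. 0 \<le> v $ x) \<and> (\<Sum>x\<in>UNIV. v $ x) = 1}"

definition strict_convex_on :: "'a::real_vector set \<Rightarrow> ('a \<Rightarrow> real) \<Rightarrow> bool" where
  "strict_convex_on S f \<longleftrightarrow> convex S \<and>
    (\<forall>x\<in>S. \<forall>y\<in>S. \<forall>t. x \<noteq> y \<and> 0 < t \<and> t < 1 \<longrightarrow>
       f ((1 - t) *\<^sub>R x + t *\<^sub>R y) < (1 - t) * f x + t * f y)"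

definition strict_concave_on :: "'a::real_vector set \<Rightarrow> ('a \<Rightarrow> real) \<Rightarrow> bool" where
  "strict_concave_on S f \<longleftrightarrow> strict_convex_on S (\<lambda>x. - f x)"

text \<open>Price p_x(t) = u_x(t)/t (division by 0 gives 0, matching the convention that
  a term with s_x = 0 is 0).\<close>
definition price :: "('m \<Rightarrow> real \<Rightarrow> real) \<Rightarrow> 'm \<Rightarrow> real \<Rightarrow> real" where
  "price u x t = u x t / t"

definition total_load :: "('n::finite \<Rightarrow> real^'m::finite) \<Rightarrow> 'm \<Rightarrow> real" where
  "total_load S x = (\<Sum>j\<in>UNIV. S j $ x)"

definition payoff ::
  "('m::finite \<Rightarrow> real \<Rightarrow> real) \<Rightarrow> (real^'m \<Rightarrow> real) \<Rightarrow> 'n::finite \<Rightarrow> ('n \<Rightarrow> real^'m) \<Rightarrow> real" where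
  "payoff u c i S = (\<Sum>x\<in>UNIV. price u x (total_load S x) * S i $ x) - c (S i)"

definition is_NE ::
  "('m::finite \<Rightarrow> real \<Rightarrow> real) \<Rightarrow> (real^'m \<Rightarrow> real) \<Rightarrow> ('n::finite \<Rightarrow> real^'m) \<Rightarrow> bool" where
  "is_NE u c S \<longleftrightarrow> (\<forall>i. S i \<in> std_simplex) \<and>
     (\<forall>i. \<forall>t\<in>std_simplex. payoff u c i (S(i := t)) \<le> payoff u c i S)"

definition is_strict_NE ::
  "('m::finite \<Rightarrow> real \<Rightarrow> real) \<Rightarrow> (real^'m \<Rightarrow> real) \<Rightarrow> ('n::finite \<Rightarrow> real^'m) \<Rightarrow> bool" where
  "is_strict_NE u c S \<longleftrightarrow> is_NE u c S \<and>
     (\<forall>i. \<forall>t\<in>std_simplex. payoff u c i (S(i := t)) \<ge> payoff u c i S \<longrightarrow> t = S i)"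

end

theory Submission
  imports Defs
begin

text \<open>Fix the strategies of all firms but one and let \<open>a\<close> be the others' total supply in
  market \<open>x\<close>. Supplying \<open>s\<close> there earns \<open>s \<cdot> u\<^sub>x(s + a) / (s + a)\<close>, whose derivative
  \<open>u\<^sub>x'(y) + a (u\<^sub>x(y) - y u\<^sub>x'(y)) / y\<^sup>2\<close> at \<open>y = s + a\<close> is antitone because \<open>u\<^sub>x\<close> is concave
  with \<open>u\<^sub>x(0) = 0\<close>; it is strictly antitone when \<open>u\<^sub>x\<close> is strictly concave. So each payoff is
  concave in the firm's own strategy, and in fact strictly concave: either the cost is strictly
  convex, or two distinct points of the simplex differ in at least two markets, one of which
  has a strictly concave \<open>u\<^sub>x\<close>. Hence best responses are unique, which makes every
  equilibrium strict. Uniqueness also makes the best-response map continuous (its graph is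
  closed), so Brouwer's theorem on the compact convex set of strategy profiles yields an
  equilibrium.\<close>

lemma strict_concave_onI:
  assumes "convex S"
    and "\<And>x y t. x \<in> S \<Longrightarrow> y \<in> S \<Longrightarrow> x \<noteq> y \<Longrightarrow> 0 < t \<Longrightarrow> t < 1 \<Longrightarrow>
           (1 - t) * f x + t * f y < f ((1 - t) *\<^sub>R x + t *\<^sub>R y)"
  shows "strict_concave_on S f"
  using assms unfolding strict_concave_on_def strict_convex_on_def by fastforce

lemma strict_concave_onD:
  assumes "strict_concave_on S f" "x \<in> S" "y \<in> S" "x \<noteq> y" "0 < t" "t < 1"
  shows "(1 - t) * f x + t * f y < f ((1 - t) *\<^sub>R x + t *\<^sub>R y)"
  using assms unfolding strict_concave_on_def strict_convex_on_def by fastforce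

lemma strict_convex_onD:
  assumes "strict_convex_on S f" "x \<in> S" "y \<in> S" "x \<noteq> y" "0 < t" "t < 1"
  shows "f ((1 - t) *\<^sub>R x + t *\<^sub>R y) < (1 - t) * f x + t * f y"
  using assms unfolding strict_convex_on_def by blast

lemma strict_concave_on_imp_convex: "strict_concave_on S f \<Longrightarrow> convex S"
  by (simp add: strict_concave_on_def strict_convex_on_def)

lemma strict_concave_on_imp_concave_on:
  assumes "strict_concave_on S f"
  shows "concave_on S f"
  unfolding concave_on_def
proof (rule convex_onI)
  fix t :: real and x y assume "0 < t" "t < 1" "x \<in> S" "y \<in> S"
  then show "- f ((1 - t) *\<^sub>R x + t *\<^sub>R y) \<le> (1 - t) * - f x + t * - f y"
    using strict_concave_onD[OF assms, of x y t] by (cases "x = y") (auto simp: algebra_simps)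
qed (rule strict_concave_on_imp_convex[OF assms])

lemma concave_on_cong:
  assumes "\<And>x. x \<in> S \<Longrightarrow> f x = g x"
  shows "concave_on S f \<longleftrightarrow> concave_on S g"
  using assms by (auto simp: concave_on_iff convex_def)

lemma strict_concave_on_cong:
  assumes "\<And>x. x \<in> S \<Longrightarrow> f x = g x"
  shows "strict_concave_on S f \<longleftrightarrow> strict_concave_on S g"
proof -
  have "(1 - t) *\<^sub>R x + t *\<^sub>R y \<in> S" if "convex S" "x \<in> S" "y \<in> S" "0 < t" "t < 1" for x y t
    using that convexD[of S x y "1 - t" t] by auto
  then show ?thesis
    using assms unfolding strict_concave_on_def strict_convex_on_def by (metis (no_types, lifting))
qed

lemma strict_concave_on_maximizer_unique:
  assumes f: "strict_concave_on S f" and st: "s \<in> S" "t \<in> S"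
    and max: "\<forall>r\<in>S. f r \<le> f s" "\<forall>r\<in>S. f r \<le> f t"
  shows "s = t"
proof (rule ccontr)
  assume "s \<noteq> t"
  define m where "m = (1 - 1/2) *\<^sub>R s + (1/2) *\<^sub>R t"
  have "(1 - 1/2) * f s + 1/2 * f t < f m"
    unfolding m_def by (rule strict_concave_onD[OF f st]) (use \<open>s \<noteq> t\<close> in auto)
  moreover have "m \<in> S"
    using convexD[OF strict_concave_on_imp_convex[OF f] st, of "1 - 1/2" "1/2"] by (simp add: m_def)
  ultimately show False
    using max st by fastforce
qed

lemma concave_on_realI:
  assumes "connected A"
    and "\<And>x. x \<in> A \<Longrightarrow> (f has_real_derivative f' x) (at x)"
    and "\<And>x y. x \<in> A \<Longrightarrow> y \<in> A \<Longrightarrow> x \<le> y \<Longrightarrow> f' y \<le> f' x"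
  shows "concave_on A f"
  unfolding concave_on_def
  by (rule convex_on_realI[where f' = "\<lambda>x. - f' x"]) (use assms in \<open>auto intro: derivative_intros\<close>)

lemma less_tangent_if_deriv_strict_antimono:
  fixes f f' :: "real \<Rightarrow> real"
  assumes A: "connected A" "z \<in> A" "w \<in> A" "w \<noteq> z"
    and f': "\<And>x. x \<in> A \<Longrightarrow> (f has_real_derivative f' x) (at x)"
    and mono: "\<And>x y. x \<in> A \<Longrightarrow> y \<in> A \<Longrightarrow> x < y \<Longrightarrow> f' y < f' x"
  shows "f w < f z + f' z * (w - z)"
proof -
  have mvt: "\<exists>\<xi>. \<xi> \<in> A \<and> a < \<xi> \<and> \<xi> < b \<and> f b - f a = (b - a) * f' \<xi>"
    if ab: "a < b" "a \<in> A" "b \<in> A" for a b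
  proof -
    have "{a..b} \<subseteq> A" using A(1) ab connected_contains_Icc by blast
    then obtain \<xi> where "a < \<xi>" "\<xi> < b" "f b - f a = (b - a) * f' \<xi>"
      using MVT2[OF ab(1), of f f'] f' by (meson atLeastAtMost_iff subsetD)
    moreover have "\<xi> \<in> A" using \<open>{a..b} \<subseteq> A\<close> calculation by auto
    ultimately show ?thesis by blast
  qed
  obtain \<xi> where \<xi>: "\<xi> \<in> A" "(z < \<xi> \<and> \<xi> < w) \<or> (w < \<xi> \<and> \<xi> < z)"
      "f w - f z = (w - z) * f' \<xi>"
  proof (cases "z < w")
    case True
    then show thesis using mvt[of z w] A that by blast
  next
    case False
    then have "w < z" using A(4) by simp
    then show thesis using mvt[of w z] A that by (auto simp: algebra_simps)
  qed
  have "(w - z) * f' \<xi> < (w - z) * f' z"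
    using \<xi>(1,2) mono[of z \<xi>] mono[of \<xi> z] A(2) by (auto intro: mult_strict_left_mono mult_strict_left_mono_neg)
  then show ?thesis using \<xi>(3) by (simp add: algebra_simps)
qed

lemma strict_concave_on_realI:
  fixes f f' :: "real \<Rightarrow> real"
  assumes A: "connected A"
    and f': "\<And>x. x \<in> A \<Longrightarrow> (f has_real_derivative f' x) (at x)"
    and mono: "\<And>x y. x \<in> A \<Longrightarrow> y \<in> A \<Longrightarrow> x < y \<Longrightarrow> f' y < f' x"
  shows "strict_concave_on A f"
proof (rule strict_concave_onI)
  show "convex A" using A by (metis is_interval_connected_1 is_interval_convex_1)
  fix x y t :: real assume xy: "x \<in> A" "y \<in> A" "x \<noteq> y" and t: "0 < t" "t < 1"
  define z where "z = (1 - t) * x + t * y"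
  have "z \<in> A" using convexD_alt[OF \<open>convex A\<close> xy(1,2), of t] t by (simp add: z_def algebra_simps)
  have "x - z = t * (x - y)" "y - z = (1 - t) * (y - x)"
    by (simp_all add: z_def algebra_simps)
  then have "x \<noteq> z" "y \<noteq> z" using xy(3) t by auto
  with \<open>z \<in> A\<close> have "f x < f z + f' z * (x - z)" "f y < f z + f' z * (y - z)"
    using less_tangent_if_deriv_strict_antimono[OF A, of z] xy f' mono by auto
  then have "(1 - t) * f x + t * f y < (1 - t) * (f z + f' z * (x - z)) + t * (f z + f' z * (y - z))"
    using t by (intro add_less_le_mono mult_strict_left_mono mult_left_mono) auto
  also have "\<dots> = f z" by (simp add: z_def algebra_simps)
  finally show "(1 - t) * f x + t * f y < f ((1 - t) *\<^sub>R x + t *\<^sub>R y)" by (simp add: z_def)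
qed

lemma concave_on_le_tangent:
  fixes f :: "real \<Rightarrow> real"
  assumes "concave_on A f" "connected A" "z \<in> interior A" "w \<in> A"
    and "(f has_real_derivative d) (at z)"
  shows "f w \<le> f z + d * (w - z)"
proof -
  have "((\<lambda>x. - f x) has_real_derivative - d) (at z within A)"
    using DERIV_minus[OF assms(5)] by (rule has_field_derivative_at_within)
  then have "- d * (w - z) \<le> - f w - - f z"
    using assms(1-4) unfolding concave_on_def by (intro convex_on_imp_above_tangent)
  then show ?thesis by (simp add: algebra_simps)
qed

lemma strict_concave_on_less_tangent:
  fixes f :: "real \<Rightarrow> real"
  assumes f: "strict_concave_on A f" and zw: "z \<in> interior A" "w \<in> A" "w \<noteq> z"
    and d: "(f has_real_derivative d) (at z)"
  shows "f w < f z + d * (w - z)"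
proof -
  define m where "m = (1 - 1/2) * z + (1/2) * w"
  have A: "convex A" using strict_concave_on_imp_convex[OF f] .
  have z: "z \<in> A" using zw(1) interior_subset by blast
  have "m \<in> A" using convexD_alt[OF A z zw(2), of "1/2"] by (simp add: m_def)
  then have "f m \<le> f z + d * (m - z)"
    by (rule concave_on_le_tangent[OF strict_concave_on_imp_concave_on[OF f] convex_connected[OF A] zw(1) _ d])
  moreover have "(1 - 1/2) * f z + 1/2 * f w < f m"
    unfolding m_def using strict_concave_onD[OF f z zw(2) zw(3)[symmetric], of "1/2"] by simp
  moreover have "m - z = (w - z) / 2" by (simp add: m_def field_simps)
  ultimately show ?thesis by (simp add: field_simps)
qed

lemma concave_on_deriv_antimono:
  fixes f :: "real \<Rightarrow> real"
  assumes f: "concave_on A f" "connected A" and xy: "x \<in> interior A" "y \<in> interior A" "x < y"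
    and d: "(f has_real_derivative d) (at x)" and e: "(f has_real_derivative e) (at y)"
  shows "e \<le> d"
proof -
  have "f y \<le> f x + d * (y - x)" "f x \<le> f y + e * (x - y)"
    using concave_on_le_tangent[OF f xy(1) _ d] concave_on_le_tangent[OF f xy(2) _ e]
      xy(1,2) interior_subset by (meson subsetD)+
  then have "e * (y - x) \<le> d * (y - x)" by (simp add: algebra_simps)
  then show ?thesis using xy(3) by simp
qed

lemma strict_concave_on_deriv_strict_antimono:
  fixes f :: "real \<Rightarrow> real"
  assumes f: "strict_concave_on A f" and xy: "x \<in> interior A" "y \<in> interior A" "x < y"
    and d: "(f has_real_derivative d) (at x)" and e: "(f has_real_derivative e) (at y)"
  shows "e < d"
proof -
  have "f y < f x + d * (y - x)"
    by (rule strict_concave_on_less_tangent[OF f xy(1) _ _ d]) (use xy interior_subset in auto)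
  moreover have "f x < f y + e * (x - y)"
    by (rule strict_concave_on_less_tangent[OF f xy(2) _ _ e]) (use xy interior_subset in auto)
  ultimately have "e * (y - x) < d * (y - x)" by (simp add: algebra_simps)
  then show ?thesis using xy(3) by simp
qed

definition revenue :: "(real \<Rightarrow> real) \<Rightarrow> real \<Rightarrow> real \<Rightarrow> real" where
  "revenue U a s = U (s + a) / (s + a) * s"

lemma revenue_has_real_derivative:
  assumes U: "(U has_real_derivative d) (at (s + a))" and pos: "0 < s + a"
  shows "(revenue U a has_real_derivative d + a * (U (s + a) - (s + a) * d) / (s + a)^2) (at s)"
proof -
  have "((\<lambda>s. U (s + a)) has_real_derivative d) (at s)"
    using U by (simp add: DERIV_shift)
  moreover have "s + a \<noteq> 0" "a + s \<noteq> 0" using pos by auto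
  ultimately show ?thesis
    unfolding revenue_def[abs_def]
    by (auto intro!: derivative_eq_intros simp: divide_simps power2_eq_square) (simp add: algebra_simps)
qed

text \<open>The two sides are the derivatives of \<^term>\<open>revenue U a\<close> at \<open>z - a\<close> and \<open>y - a\<close>.\<close>

lemma revenue_deriv_antimono:
  fixes U :: "real \<Rightarrow> real"
  assumes U0: "U 0 = 0" and U: "concave_on {0..} U"
    and d: "(U has_real_derivative d) (at y)" and e: "(U has_real_derivative e) (at z)"
    and a: "0 \<le> a" "a \<le> y" and yz: "0 < y" "y < z"
  shows "e + a * (U z - z * e) / z^2 \<le> d + a * (U y - y * d) / y^2"
    and "e < d \<Longrightarrow> e + a * (U z - z * e) / z^2 < d + a * (U y - y * d) / y^2"
proof -
  define h where "h = U y - y * d"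
  have int: "y \<in> interior {0..}" "z \<in> interior {0..}" using yz by auto
  have "e \<le> d" by (rule concave_on_deriv_antimono[OF U connected_Ici int yz(2) d e])
  have "U 0 \<le> U y + d * (0 - y)"
    by (rule concave_on_le_tangent[OF U connected_Ici int(1) _ d]) simp
  then have "0 \<le> h" using U0 by (simp add: h_def mult.commute)
  have "U z \<le> U y + d * (z - y)"
    by (rule concave_on_le_tangent[OF U connected_Ici int(1) _ d]) (use yz in simp)
  then have "U z - z * e \<le> h + z * (d - e)" by (simp add: h_def algebra_simps)
  then have "a * (U z - z * e) / z^2 \<le> a * (h + z * (d - e)) / z^2"
    using a(1) by (intro divide_right_mono mult_left_mono) auto
  also have "\<dots> = a * h / z^2 + a / z * (d - e)"
    using yz by (simp add: field_simps power2_eq_square)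
  also have "a * h / z^2 \<le> a * h / y^2"
    using \<open>0 \<le> h\<close> a(1) yz by (intro divide_left_mono mult_nonneg_nonneg power_strict_mono[THEN less_imp_le]) auto
  finally have main: "e + a * (U z - z * e) / z^2 \<le> d + a * h / y^2 - (1 - a / z) * (d - e)"
    by (simp add: algebra_simps)
  have "0 < 1 - a / z" using a yz by simp
  then have "0 \<le> (1 - a / z) * (d - e)" using \<open>e \<le> d\<close> by simp
  then show "e + a * (U z - z * e) / z^2 \<le> d + a * (U y - y * d) / y^2"
    using main unfolding h_def by linarith
  assume "e < d"
  then have "0 < (1 - a / z) * (d - e)" using \<open>0 < 1 - a / z\<close> by simp
  then show "e + a * (U z - z * e) / z^2 < d + a * (U y - y * d) / y^2"
    using main unfolding h_def by linarith
qed

lemma revenue_no_competition: "0 \<le> s \<Longrightarrow> U 0 = 0 \<Longrightarrow> revenue U 0 s = U s"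
  by (cases "s = 0") (auto simp: revenue_def)

lemma revenue_has_antitone_derivative:
  fixes U :: "real \<Rightarrow> real"
  assumes U0: "U 0 = 0" and U: "concave_on {0..} U" and diff: "U differentiable_on {0..}"
    and a: "0 < a"
  defines "D \<equiv> \<lambda>s. deriv U (s + a) + a * (U (s + a) - (s + a) * deriv U (s + a)) / (s + a)^2"
  shows "\<And>s. s \<in> {0..} \<Longrightarrow> (revenue U a has_real_derivative D s) (at s)"
    and "\<And>s t. s \<in> {0..} \<Longrightarrow> t \<in> {0..} \<Longrightarrow> s \<le> t \<Longrightarrow> D t \<le> D s"
    and "\<And>s t. strict_concave_on {0..} U \<Longrightarrow> s \<in> {0..} \<Longrightarrow> t \<in> {0..} \<Longrightarrow> s < t \<Longrightarrow> D t < D s"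
proof -
  have dU: "(U has_real_derivative deriv U y) (at y)" if "0 < y" for y
  proof -
    have "U differentiable (at y within {0..})" using diff that by (simp add: differentiable_on_def)
    moreover have "at y within {0..} = at y" using that by (intro at_within_interior) simp
    ultimately show ?thesis by (simp add: DERIV_deriv_iff_real_differentiable)
  qed
  show "(revenue U a has_real_derivative D s) (at s)" if "s \<in> {0..}" for s
    unfolding D_def using that a by (intro revenue_has_real_derivative dU) auto
  have y: "0 < s + a" "s + a < t + a" "a \<le> s + a" "0 < t + a"
    if "s \<in> {0..}" "s < t" for s t :: real
    using that a by auto
  show "D t \<le> D s" if "s \<in> {0..}" "t \<in> {0..}" "s \<le> t" for s t
  proof (cases "s = t")
    case False
    with that have "s < t" by simp
    with that y[of s t] show ?thesis
      using revenue_deriv_antimono(1)[OF U0 U dU[of "s + a"] dU[of "t + a"]] a by (simp add: D_def)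
  qed simp
  show "D t < D s" if "strict_concave_on {0..} U" "s \<in> {0..}" "t \<in> {0..}" "s < t" for s t
  proof -
    note y = y[OF that(2,4)]
    have "deriv U (t + a) < deriv U (s + a)"
      by (rule strict_concave_on_deriv_strict_antimono[OF that(1) _ _ y(2) dU[OF y(1)] dU[OF y(4)]])
        (use y in auto)
    then show ?thesis
      using revenue_deriv_antimono(2)[OF U0 U dU[OF y(1)] dU[OF y(4)]] a y by (simp add: D_def)
  qed
qed

lemma concave_on_revenue:
  fixes U :: "real \<Rightarrow> real"
  assumes U0: "U 0 = 0" and U: "concave_on {0..} U" and diff: "U differentiable_on {0..}"
    and a: "0 \<le> a"
  shows "concave_on {0..} (revenue U a)"
proof (cases "a = 0")
  case True
  then show ?thesis
    using concave_on_cong[of "{0..}" "revenue U a" U] revenue_no_competition U0 U by simp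
next
  case False
  with a have "0 < a" by simp
  note D = revenue_has_antitone_derivative[OF U0 U diff this]
  show ?thesis by (rule concave_on_realI[OF connected_Ici D(1,2)])
qed

lemma strict_concave_on_revenue:
  fixes U :: "real \<Rightarrow> real"
  assumes U0: "U 0 = 0" and U: "concave_on {0..} U" and diff: "U differentiable_on {0..}"
    and a: "0 \<le> a" and strict: "strict_concave_on {0..} U"
  shows "strict_concave_on {0..} (revenue U a)"
proof (cases "a = 0")
  case True
  then show ?thesis
    using strict_concave_on_cong[of "{0..}" "revenue U a" U] revenue_no_competition U0 strict by simp
next
  case False
  with a have "0 < a" by simp
  note D = revenue_has_antitone_derivative[OF U0 U diff this]
  show ?thesis by (rule strict_concave_on_realI[OF connected_Ici D(1) D(3)[OF strict]])
qed

lemma std_simplex_nonneg: "p \<in> std_simplex \<Longrightarrow> 0 \<le> p $ x"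
  by (simp add: std_simplex_def)

lemma std_simplex_sum: "p \<in> std_simplex \<Longrightarrow> (\<Sum>x\<in>UNIV. p $ x) = 1"
  by (simp add: std_simplex_def)

lemma convex_std_simplex: "convex std_simplex"
proof (rule convexI)
  fix p q :: "real^'m" and u v :: real
  assume "p \<in> std_simplex" "q \<in> std_simplex" "0 \<le> u" "0 \<le> v" "u + v = 1"
  then show "u *\<^sub>R p + v *\<^sub>R q \<in> std_simplex"
    by (simp add: std_simplex_def sum.distrib flip: sum_distrib_left)
qed

lemma closed_std_simplex: "closed std_simplex"
proof -
  have "std_simplex = {p. \<forall>x. 0 \<le> p $ x} \<inter> {p. (\<Sum>x\<in>UNIV. p $ x) = 1}"
    by (auto simp: std_simplex_def)
  moreover have "closed {p :: real^'m. \<forall>x. 0 \<le> p $ x}"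
    by (intro closed_Collect_all closed_Collect_le continuous_intros)
  moreover have "closed {p :: real^'m. (\<Sum>x\<in>UNIV. p $ x) = 1}"
    by (intro closed_Collect_eq continuous_intros)
  ultimately show ?thesis by (metis closed_Int)
qed

lemma compact_std_simplex: "compact std_simplex"
proof -
  have "norm p \<le> 1" if "p \<in> std_simplex" for p :: "real^'m"
    using norm_le_l1_cart[of p] that by (simp add: std_simplex_nonneg std_simplex_sum)
  then show ?thesis
    using closed_std_simplex by (auto simp: compact_eq_bounded_closed bounded_iff)
qed

lemma std_simplex_nonempty: "std_simplex \<noteq> {}"
proof -
  have "(\<chi> x. 1 / real CARD('m)) \<in> (std_simplex :: (real^'m::finite) set)"
    by (simp add: std_simplex_def)
  then show ?thesis by blast
qed

lemma std_simplex_eq_if_agree_off: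
  assumes "p \<in> std_simplex" "q \<in> std_simplex" and eq: "\<And>y. y \<noteq> x \<Longrightarrow> p $ y = q $ y"
  shows "p = q"
proof -
  have "p $ x + (\<Sum>y\<in>UNIV - {x}. p $ y) = q $ x + (\<Sum>y\<in>UNIV - {x}. q $ y)"
    using assms(1,2) by (simp add: std_simplex_sum flip: sum.remove)
  moreover have "(\<Sum>y\<in>UNIV - {x}. p $ y) = (\<Sum>y\<in>UNIV - {x}. q $ y)"
    using eq by (intro sum.cong) auto
  ultimately have "p $ x = q $ x" by simp
  with eq show ?thesis unfolding vec_eq_iff by metis
qed

lemma std_simplex_neq_ex_coord:
  assumes pq: "p \<in> std_simplex" "q \<in> std_simplex" "p \<noteq> q" and card: "card {x. \<not> P x} \<le> 1"
  shows "\<exists>z. P z \<and> p $ z \<noteq> q $ z"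
proof (rule ccontr)
  assume none: "\<not> ?thesis"
  obtain x where x: "p $ x \<noteq> q $ x" using pq(3) by (auto simp: vec_eq_iff)
  obtain y where y: "y \<noteq> x" "p $ y \<noteq> q $ y" using std_simplex_eq_if_agree_off[OF pq(1,2)] pq(3) by blast
  have "card {x, y} \<le> card {x. \<not> P x}" using x y(2) none by (intro card_mono) auto
  with card y(1) show False by simp
qed

lemma strict_concave_on_std_simplex_separable:
  fixes f :: "'m::finite \<Rightarrow> real \<Rightarrow> real" and c :: "real^'m \<Rightarrow> real"
  assumes f: "\<And>x. concave_on {0..} (f x)" and c: "convex_on std_simplex c"
    and strict: "card {x. \<not> strict_concave_on {0..} (f x)} \<le> 1 \<or> strict_convex_on std_simplex c"
  shows "strict_concave_on std_simplex (\<lambda>p. (\<Sum>x\<in>UNIV. f x (p $ x)) - c p)"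
proof (rule strict_concave_onI[OF convex_std_simplex])
  fix p q :: "real^'m" and t :: real
  assume pq: "p \<in> std_simplex" "q \<in> std_simplex" "p \<noteq> q" and t: "0 < t" "t < 1"
  define r where "r = (1 - t) *\<^sub>R p + t *\<^sub>R q"
  have r: "r $ x = (1 - t) * p $ x + t * q $ x" for x by (simp add: r_def)
  have coord: "(1 - t) * f x (p $ x) + t * f x (q $ x) \<le> f x (r $ x)" for x
    unfolding r using concave_onD[OF f, of t "p $ x" "q $ x"] pq t by (simp add: std_simplex_nonneg)
  have coord_strict: "(1 - t) * f x (p $ x) + t * f x (q $ x) < f x (r $ x)"
    if "strict_concave_on {0..} (f x)" "p $ x \<noteq> q $ x" for x
    unfolding r using strict_concave_onD[OF that(1) _ _ that(2), of t] pq t by (simp add: std_simplex_nonneg)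
  have cost: "c r \<le> (1 - t) * c p + t * c q"
    unfolding r_def using convex_onD[OF c, of t p q] pq t by simp
  have "(\<Sum>x\<in>UNIV. (1 - t) * f x (p $ x) + t * f x (q $ x)) - ((1 - t) * c p + t * c q)
      < (\<Sum>x\<in>UNIV. f x (r $ x)) - c r"
  proof (cases "strict_convex_on std_simplex c")
    case True
    then have "c r < (1 - t) * c p + t * c q"
      unfolding r_def using strict_convex_onD pq t by blast
    moreover have "(\<Sum>x\<in>UNIV. (1 - t) * f x (p $ x) + t * f x (q $ x)) \<le> (\<Sum>x\<in>UNIV. f x (r $ x))"
      by (intro sum_mono coord)
    ultimately show ?thesis by linarith
  next
    case False
    then have "card {x. \<not> strict_concave_on {0..} (f x)} \<le> 1" using strict by blast
    from std_simplex_neq_ex_coord[OF pq this]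
    obtain z where "strict_concave_on {0..} (f z)" "p $ z \<noteq> q $ z" by blast
    then have "(\<Sum>x\<in>UNIV. (1 - t) * f x (p $ x) + t * f x (q $ x)) < (\<Sum>x\<in>UNIV. f x (r $ x))"
      by (intro sum_strict_mono_ex1) (auto intro: coord coord_strict)
    with cost show ?thesis by linarith
  qed
  moreover have "(1 - t) * ((\<Sum>x\<in>UNIV. f x (p $ x)) - c p) + t * ((\<Sum>x\<in>UNIV. f x (q $ x)) - c q)
      = (\<Sum>x\<in>UNIV. (1 - t) * f x (p $ x) + t * f x (q $ x)) - ((1 - t) * c p + t * c q)"
    by (simp add: sum.distrib right_diff_distrib flip: sum_distrib_left)
  ultimately show "(1 - t) * ((\<Sum>x\<in>UNIV. f x (p $ x)) - c p) + t * ((\<Sum>x\<in>UNIV. f x (q $ x)) - c q)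
      < (\<Sum>x\<in>UNIV. f x (((1 - t) *\<^sub>R p + t *\<^sub>R q) $ x)) - c ((1 - t) *\<^sub>R p + t *\<^sub>R q)"
    by (simp add: r_def)
qed

text \<open>Strategy profiles are taken in the Euclidean space \<open>'a^'n\<close>, where Brouwer's theorem
  applies; \<open>($) Z\<close> turns such a profile into the function form used by \<^const>\<open>payoff\<close>.\<close>

definition profiles :: "'a set \<Rightarrow> ('a^'n::finite) set" where
  "profiles K = {Z. \<forall>j. Z $ j \<in> K}"

lemma closed_profiles: "closed K \<Longrightarrow> closed (profiles K)"
  unfolding profiles_def
  by (intro closed_Collect_all) (simp add: closed_vimage_vec_nth[unfolded vimage_def])

lemma bounded_profiles:
  fixes K :: "'a::real_normed_vector set"
  assumes "bounded K"
  shows "bounded (profiles K :: ('a^'n::finite) set)"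
proof -
  obtain B where B: "\<And>k. k \<in> K \<Longrightarrow> norm k \<le> B" using assms by (auto simp: bounded_iff)
  have "norm Z \<le> real CARD('n) * B" if "Z \<in> profiles K" for Z :: "'a^'n"
  proof -
    have "norm Z \<le> (\<Sum>j\<in>UNIV. norm (Z $ j))"
      unfolding norm_vec_def by (rule L2_set_le_sum) simp
    also have "\<dots> \<le> (\<Sum>j\<in>(UNIV :: 'n set). B)"
      using that B by (intro sum_mono) (auto simp: profiles_def)
    finally show ?thesis by simp
  qed
  then show ?thesis by (auto simp: bounded_iff)
qed

lemma compact_profiles:
  fixes K :: "'a::euclidean_space set"
  shows "compact K \<Longrightarrow> compact (profiles K :: ('a^'n::finite) set)"
  by (simp add: compact_eq_bounded_closed bounded_profiles closed_profiles)

lemma convex_profiles: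
  assumes "convex K"
  shows "convex (profiles K)"
proof (rule convexI)
  fix Z W :: "'a^'n" and a b :: real
  assume "Z \<in> profiles K" "W \<in> profiles K" "0 \<le> a" "0 \<le> b" "a + b = 1"
  then show "a *\<^sub>R Z + b *\<^sub>R W \<in> profiles K"
    using convexD[OF assms] by (simp add: profiles_def)
qed

lemma profiles_nonempty:
  assumes "K \<noteq> {}"
  shows "profiles K \<noteq> {}"
proof -
  obtain k where "k \<in> K" using assms by blast
  then have "(\<chi> j. k) \<in> (profiles K :: ('a^'n::finite) set)" by (simp add: profiles_def)
  then show ?thesis by blast
qed

lemma continuous_on_unique_maximizer:
  fixes g :: "'a::euclidean_space \<Rightarrow> 'b::euclidean_space \<Rightarrow> real" and m :: "'a \<Rightarrow> 'b"
  assumes P: "closed P" and K: "compact K"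
    and g: "continuous_on (P \<times> K) (\<lambda>(x, t). g x t)"
    and m: "\<And>x. x \<in> P \<Longrightarrow> m x \<in> K" "\<And>x t. x \<in> P \<Longrightarrow> t \<in> K \<Longrightarrow> g x t \<le> g x (m x)"
    and unique: "\<And>x s. x \<in> P \<Longrightarrow> s \<in> K \<Longrightarrow> \<forall>t\<in>K. g x t \<le> g x s \<Longrightarrow> s = m x"
  shows "continuous_on P m"
proof (rule continuous_from_closed_graph[OF K])
  show "m \<in> P \<rightarrow> K" using m(1) by blast
  have graph: "(\<lambda>x. (x, m x)) ` P = (P \<times> K) \<inter> (\<Inter>t\<in>K. {w \<in> P \<times> K. g (fst w) t \<le> g (fst w) (snd w)})"
  proof (intro equalityI subsetI)
    fix w assume "w \<in> (\<lambda>x. (x, m x)) ` P"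
    then obtain x where "x \<in> P" "w = (x, m x)" by blast
    then show "w \<in> (P \<times> K) \<inter> (\<Inter>t\<in>K. {w \<in> P \<times> K. g (fst w) t \<le> g (fst w) (snd w)})"
      using m by simp
  next
    fix w assume "w \<in> (P \<times> K) \<inter> (\<Inter>t\<in>K. {w \<in> P \<times> K. g (fst w) t \<le> g (fst w) (snd w)})"
    then have "fst w \<in> P" "snd w \<in> K" "\<forall>t\<in>K. g (fst w) t \<le> g (fst w) (snd w)"
      by (auto simp: mem_Times_iff)
    then have "snd w = m (fst w)" by (rule unique)
    with \<open>fst w \<in> P\<close> show "w \<in> (\<lambda>x. (x, m x)) ` P"
      by (intro image_eqI[of _ _ "fst w"]) (simp_all add: prod_eq_iff)
  qed
  have closed_PK: "closed (P \<times> K)" using P K by (simp add: closed_Times compact_imp_closed)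
  have g': "continuous_on (P \<times> K) (\<lambda>w. g (fst w) (snd w))"
    using g by (simp add: case_prod_unfold)
  have "closed {w \<in> P \<times> K. g (fst w) t \<le> g (fst w) (snd w)}" if "t \<in> K" for t
  proof (rule continuous_on_closed_Collect_le[OF _ g' closed_PK])
    show "continuous_on (P \<times> K) (\<lambda>w. g (fst w) t)"
      by (rule continuous_on_compose2[OF g', of _ "\<lambda>w. (fst w, t)", simplified])
        (intro continuous_intros, use that in auto)
  qed
  then show "closed ((\<lambda>x. (x, m x)) ` P)"
    unfolding graph using closed_PK by blast
qed

lemma equilibrium_exists_if_unique_best_responses:
  fixes \<phi> :: "'n::finite \<Rightarrow> 'a::euclidean_space^'n \<Rightarrow> 'a \<Rightarrow> real"
  assumes K: "compact K" "convex K" "K \<noteq> {}"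
    and \<phi>: "\<And>i. continuous_on (profiles K \<times> K) (\<lambda>(Z, t). \<phi> i Z t)"
    and unique: "\<And>i Z s t. Z \<in> profiles K \<Longrightarrow> s \<in> K \<Longrightarrow> t \<in> K \<Longrightarrow>
      \<forall>r\<in>K. \<phi> i Z r \<le> \<phi> i Z s \<Longrightarrow> \<forall>r\<in>K. \<phi> i Z r \<le> \<phi> i Z t \<Longrightarrow> s = t"
  obtains Z where "Z \<in> profiles K" "\<And>i t. t \<in> K \<Longrightarrow> \<phi> i Z t \<le> \<phi> i Z (Z $ i)"
proof -
  define br where "br i Z = (SOME t. t \<in> K \<and> (\<forall>r\<in>K. \<phi> i Z r \<le> \<phi> i Z t))" for i Z
  have br: "br i Z \<in> K \<and> (\<forall>r\<in>K. \<phi> i Z r \<le> \<phi> i Z (br i Z))" if "Z \<in> profiles K" for i Z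
  proof -
    have "continuous_on K (\<lambda>t. (\<lambda>(Z, t). \<phi> i Z t) (Z, t))"
      by (rule continuous_on_compose2[OF \<phi>[of i]]) (intro continuous_intros, use that in auto)
    then have "continuous_on K (\<phi> i Z)" by simp
    then have "\<exists>t. t \<in> K \<and> (\<forall>r\<in>K. \<phi> i Z r \<le> \<phi> i Z t)"
      using continuous_attains_sup[OF K(1,3)] by blast
    then show ?thesis unfolding br_def by (rule someI_ex)
  qed
  define F where "F Z = (\<chi> i. br i Z)" for Z
  have F: "F \<in> profiles K \<rightarrow> profiles K" using br by (auto simp: F_def profiles_def)
  have "continuous_on (profiles K) (br i)" for i
  proof (rule continuous_on_unique_maximizer[OF closed_profiles[OF compact_imp_closed[OF K(1)]] K(1) \<phi>])
    fix Z :: "'a^'n" assume Z: "Z \<in> profiles K"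
    then show "br i Z \<in> K" using br by blast
    show "\<phi> i Z t \<le> \<phi> i Z (br i Z)" if "t \<in> K" for t using br[OF Z] that by blast
    show "s = br i Z" if "s \<in> K" "\<forall>t\<in>K. \<phi> i Z t \<le> \<phi> i Z s" for s
      using unique[OF Z that(1) _ that(2)] br[OF Z] by blast
  qed
  then have cont: "continuous_on (profiles K) F"
    unfolding F_def by (rule continuous_on_vec_lambda)
  obtain Z where "Z \<in> profiles K" "F Z = Z"
    by (rule brouwer[OF compact_profiles[OF K(1)] convex_profiles[OF K(2)] profiles_nonempty[OF K(3)] cont F])
  show thesis
  proof (rule that[OF \<open>Z \<in> profiles K\<close>])
    fix i t assume "t \<in> K"
    have "br i Z = Z $ i" using \<open>F Z = Z\<close> by (auto simp: F_def vec_eq_iff)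
    then show "\<phi> i Z t \<le> \<phi> i Z (Z $ i)" using br[OF \<open>Z \<in> profiles K\<close>, of i] \<open>t \<in> K\<close> by simp
  qed
qed

lemma continuous_on_revenue:
  assumes U: "continuous_on {0..} U" and U0: "U 0 = 0"
  shows "continuous_on ({0..} \<times> {0..}) (\<lambda>(a, s). revenue U a s)"
  unfolding continuous_on_def
proof (intro ballI)
  fix w0 :: "real \<times> real" assume w0: "w0 \<in> {0..} \<times> {0..}"
  let ?D = "{0..} \<times> {0..} :: (real \<times> real) set"
  have "continuous_on ?D (\<lambda>w. U (snd w + fst w))"
    by (rule continuous_on_compose2[OF U]) (intro continuous_intros, auto)
  then have U_lim: "((\<lambda>w. U (snd w + fst w)) \<longlongrightarrow> U (snd w0 + fst w0)) (at w0 within ?D)"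
    using w0 unfolding continuous_on_def by blast
  show "((\<lambda>(a, s). revenue U a s) \<longlongrightarrow> (\<lambda>(a, s). revenue U a s) w0) (at w0 within ?D)"
  proof (cases "snd w0 + fst w0 = 0")
    case False
    then show ?thesis
      unfolding revenue_def case_prod_unfold by (intro tendsto_intros U_lim) auto
  next
    case True
    with w0 have "w0 = (0, 0)" by (auto simp: prod_eq_iff)
    have "\<bar>revenue U (fst w) (snd w)\<bar> \<le> \<bar>U (snd w + fst w)\<bar>" if "w \<in> ?D" for w
    proof (cases "snd w + fst w = 0")
      case False
      with that have pos: "0 < snd w + fst w" "0 \<le> snd w" "snd w / (snd w + fst w) \<le> 1" by auto
      then have "\<bar>revenue U (fst w) (snd w)\<bar> = \<bar>U (snd w + fst w)\<bar> * (snd w / (snd w + fst w))"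
        by (simp add: revenue_def abs_mult)
      also have "\<dots> \<le> \<bar>U (snd w + fst w)\<bar>"
        using pos by (intro mult_left_le) auto
      finally show ?thesis .
    qed (simp add: revenue_def)
    then have "\<forall>\<^sub>F w in at w0 within ?D. norm (revenue U (fst w) (snd w)) \<le> \<bar>U (snd w + fst w)\<bar>"
      by (auto simp: eventually_at_filter)
    moreover have "((\<lambda>w. \<bar>U (snd w + fst w)\<bar>) \<longlongrightarrow> 0) (at w0 within ?D)"
      using tendsto_rabs[OF U_lim] \<open>w0 = (0, 0)\<close> U0 by simp
    ultimately have "((\<lambda>w. revenue U (fst w) (snd w)) \<longlongrightarrow> 0) (at w0 within ?D)"
      by (rule Lim_null_comparison)
    then show ?thesis using \<open>w0 = (0, 0)\<close> by (simp add: case_prod_unfold revenue_def)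
  qed
qed

definition others_load :: "('n::finite \<Rightarrow> real^'m::finite) \<Rightarrow> 'n \<Rightarrow> 'm \<Rightarrow> real" where
  "others_load S i x = (\<Sum>j\<in>UNIV - {i}. S j $ x)"

lemma payoff_fun_upd:
  "payoff u c i (S(i := t)) = (\<Sum>x\<in>UNIV. revenue (u x) (others_load S i x) (t $ x)) - c t"
proof -
  have "total_load (S(i := t)) x = t $ x + others_load S i x" for x
    unfolding total_load_def others_load_def by (subst sum.remove[of UNIV i]) (auto intro!: sum.cong)
  then show ?thesis by (simp add: payoff_def price_def revenue_def)
qed

locale oligopoly =
  fixes u :: "'m::finite \<Rightarrow> real \<Rightarrow> real" and c :: "real^'m \<Rightarrow> real"
  assumes u0: "\<And>x. u x 0 = 0"
    and u_concave: "\<And>x. concave_on {0..} (u x)"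
    and u_diff: "\<And>x. u x differentiable_on {0..}"
    and c_convex: "convex_on std_simplex c"
    and c_diff: "c differentiable_on std_simplex"
    and strictness: "card {x. \<not> strict_concave_on {0..} (u x)} \<le> 1 \<or> strict_convex_on std_simplex c"
begin

lemma strict_concave_on_payoff:
  assumes S: "\<And>j. S j \<in> std_simplex"
  shows "strict_concave_on std_simplex (\<lambda>t. payoff u c i (S(i := t)))"
proof -
  have a: "0 \<le> others_load S i x" for x
    unfolding others_load_def by (intro sum_nonneg std_simplex_nonneg S)
  have "{x. \<not> strict_concave_on {0..} (revenue (u x) (others_load S i x))}
      \<subseteq> {x. \<not> strict_concave_on {0..} (u x)}"
    using strict_concave_on_revenue[OF u0 u_concave u_diff a] by blast
  then have "card {x. \<not> strict_concave_on {0..} (revenue (u x) (others_load S i x))}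
      \<le> card {x. \<not> strict_concave_on {0..} (u x)}"
    by (intro card_mono) auto
  then have "card {x. \<not> strict_concave_on {0..} (revenue (u x) (others_load S i x))} \<le> 1
      \<or> strict_convex_on std_simplex c"
    using strictness by linarith
  then show ?thesis
    unfolding payoff_fun_upd
    by (rule strict_concave_on_std_simplex_separable[OF concave_on_revenue[OF u0 u_concave u_diff a] c_convex])
qed

lemma NE_imp_strict_NE:
  assumes NE: "is_NE u c S"
  shows "is_strict_NE u c S"
  unfolding is_strict_NE_def
proof (intro conjI allI ballI impI NE)
  fix i t assume t: "t \<in> std_simplex" "payoff u c i S \<le> payoff u c i (S(i := t))"
  have S: "\<And>j. S j \<in> std_simplex"
    and best: "\<forall>r\<in>std_simplex. payoff u c i (S(i := r)) \<le> payoff u c i S"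
    using NE by (auto simp: is_NE_def)
  show "t = S i"
    by (rule strict_concave_on_maximizer_unique[OF strict_concave_on_payoff[of S i, OF S] t(1) S])
      (use best t in auto)
qed

lemma continuous_on_payoff_deviation:
  "continuous_on (profiles std_simplex \<times> std_simplex) (\<lambda>(Z, t). payoff u c i ((($) Z)(i := t)))"
proof -
  let ?P = "profiles std_simplex \<times> std_simplex :: ((real^'m^'n::finite) \<times> (real^'m)) set"
  have load: "continuous_on ?P (\<lambda>w. (others_load (($) (fst w)) i x, snd w $ x))" for x
    unfolding others_load_def by (intro continuous_intros)
  have nonneg: "(others_load (($) (fst w)) i x, snd w $ x) \<in> {0..} \<times> {0..}" if "w \<in> ?P" for w x
    using that by (auto simp: others_load_def profiles_def std_simplex_nonneg intro!: sum_nonneg)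
  have rev: "continuous_on ?P (\<lambda>w. revenue (u x) (others_load (($) (fst w)) i x) (snd w $ x))" for x
  proof -
    have "continuous_on ?P (\<lambda>w. (\<lambda>(a, s). revenue (u x) a s) (others_load (($) (fst w)) i x, snd w $ x))"
      by (rule continuous_on_compose2[OF continuous_on_revenue[OF differentiable_imp_continuous_on[OF u_diff] u0] load])
        (use nonneg in blast)
    then show ?thesis by simp
  qed
  have cost: "continuous_on ?P (\<lambda>w. c (snd w))"
    by (rule continuous_on_compose2[OF differentiable_imp_continuous_on[OF c_diff]])
      (auto intro: continuous_intros)
  show ?thesis
    unfolding case_prod_unfold payoff_fun_upd by (intro continuous_intros rev cost)
qed

lemma equilibrium_exists: "\<exists>S :: 'n::finite \<Rightarrow> real^'m. is_NE u c S"
proof -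
  have unique: "s = t"
    if "Z \<in> profiles std_simplex" "s \<in> std_simplex" "t \<in> std_simplex"
      "\<forall>r\<in>std_simplex. payoff u c i ((($) Z)(i := r)) \<le> payoff u c i ((($) Z)(i := s))"
      "\<forall>r\<in>std_simplex. payoff u c i ((($) Z)(i := r)) \<le> payoff u c i ((($) Z)(i := t))"
    for i and Z :: "real^'m^'n" and s t
    using that by (intro strict_concave_on_maximizer_unique[OF strict_concave_on_payoff])
      (auto simp: profiles_def)
  show ?thesis
  proof (rule equilibrium_exists_if_unique_best_responses[where \<phi> = "\<lambda>i Z t. payoff u c i ((($) Z)(i := t))",
        OF compact_std_simplex convex_std_simplex std_simplex_nonempty continuous_on_payoff_deviation unique])
    fix Z :: "real^'m^'n"
    assume "Z \<in> profiles std_simplex"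
      and "\<And>i t. t \<in> std_simplex \<Longrightarrow> payoff u c i ((($) Z)(i := t)) \<le> payoff u c i ((($) Z)(i := Z $ i))"
    then have "is_NE u c (($) Z)" by (auto simp: is_NE_def profiles_def)
    then show ?thesis by blast
  qed
qed

end

theorem proposition2:
  fixes u :: "'m::finite \<Rightarrow> real \<Rightarrow> real"
    and c :: "real^'m \<Rightarrow> real"
  assumes u0: "\<And>x. u x 0 = 0"
    and u_nonneg: "\<And>x t. 0 \<le> t \<Longrightarrow> 0 \<le> u x t"
    and c_nonneg: "\<And>s. s \<in> std_simplex \<Longrightarrow> 0 \<le> c s"
    and u_concave: "\<And>x. concave_on {0..} (u x)"
    and u_diff: "\<And>x. u x differentiable_on {0..}"
    and c_convex: "convex_on std_simplex c"
    and c_diff: "c differentiable_on std_simplex"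
    and strictness: "card {x. \<not> strict_concave_on {0..} (u x)} \<le> 1
                     \<or> strict_convex_on std_simplex c"
  shows "(\<exists>S :: 'n::finite \<Rightarrow> real^'m. is_NE u c S)
         \<and> (\<forall>S :: 'n \<Rightarrow> real^'m. is_NE u c S \<longrightarrow> is_strict_NE u c S)"
proof -
  interpret oligopoly u c
    by unfold_locales (fact u0 u_concave u_diff c_convex c_diff strictness)+
  show ?thesis
    using equilibrium_exists NE_imp_strict_NE by blast
qed

end
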